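(* Let $c_{\min}\le c_{\max}$ and $d_{\min}\le d_{\max}$ be integers, $T=\{c_{\min},\dots,c_{\max}\}\times\{d_{\min},\dots,d_{\max}\}$, $a:T\to[0,1]$ and $p:T\to\mathbb{R}$. For $(c,d),(c',d')\in T$ write $(c,d)\to(c',d')$ for the inequality $p_{c,d}-c\,a_{c,d}\ge p_{c',d'}-c\,a_{c',d'}$. Assume $a$ is monotonic: $a_{c,d}\ge a_{c',d'}$ whenever $c\le c'$ and $d\ge d'$. Suppose that for every $(c,d)\in T$: $(c,d)\to(c+1,d)$ if $c<c_{\max}$; $(c,d)\to(c-1,d)$ if $c>c_{\min}$; $(c,d)\to(c,d-1)$ if $d>d_{\min}$. Then $(c,d)\to(c',d')$ holds for all $(c,d)\in T$ and all $(c',d')\in T$ with $d'\le d$.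
   Context: $a_{c,d}$ is the interim winning probability and $p_{c,d}$ the expected payment of a bidder reporting type $(c,d)$ (forwarding cost $c$, predicted path duration $d$); a bidder of true cost $c$ winning with probability $a$ has expected cost $c\,a$. The inequality $(c,d)\to(c',d')$ is the incentive-compatibility (IC) constraint for a bidder of true type $(c,d)$ misreporting $(c',d')$. In the paper, IC constraints for over-reporting the path duration ($d'>d$) are excluded from consideration by a separate argument, so "all IC constraints" means all constraints $(c,d)\to(c',d')$ with $d'\le d$. *)

theory Defs
  imports Main "HOL.Real"
begin

text \<open>IC constraint (c,d) -> (c',d'): a bidder of true type (c,d) does not gain by reporting (c',d').\<close>
definition IC :: "(int \<Rightarrow> int \<Rightarrow> real) \<Rightarrow> (int \<Rightarrow> int \<Rightarrow> real) \<Rightarrow> int \<Rightarrow> int \<Rightarrow> int \<Rightarrow> int \<Rightarrow> bool" where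
  "IC a p c d c' d' \<longleftrightarrow> p c d - real_of_int c * a c d \<ge> p c' d' - real_of_int c * a c' d'"

end

theory Submission
  imports Defs
begin

lemma IC_refl: "IC a p c d c d"
  by (simp add: IC_def)

text \<open>Chaining two misreports (c,d) to (c1,d1) to (c2,d2) loses the true type (c,d) an extra
  (c1 - c)(a c1 d1 - a c2 d2) compared with the second constraint; this is nonnegative when the
  cost step and the drop in allocation point the same way, which is exactly what monotonicity of
  the allocation in the cost provides.\<close>

lemma IC_trans:
  assumes "IC a p c d c\<^sub>1 d\<^sub>1" and "IC a p c\<^sub>1 d\<^sub>1 c\<^sub>2 d\<^sub>2"
    and "0 \<le> real_of_int (c\<^sub>1 - c) * (a c\<^sub>1 d\<^sub>1 - a c\<^sub>2 d\<^sub>2)"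
  shows "IC a p c d c\<^sub>2 d\<^sub>2"
  using assms unfolding IC_def by (simp add: algebra_simps)

locale local_IC =
  fixes cmin cmax dmin dmax :: int
    and a p :: "int \<Rightarrow> int \<Rightarrow> real"
  assumes antimono_cost:
      "\<lbrakk>cmin \<le> c; c \<le> c'; c' \<le> cmax; dmin \<le> d; d \<le> dmax\<rbrakk> \<Longrightarrow> a c' d \<le> a c d"
    and IC_up: "\<lbrakk>cmin \<le> c; c < cmax; dmin \<le> d; d \<le> dmax\<rbrakk> \<Longrightarrow> IC a p c d (c + 1) d"
    and IC_down: "\<lbrakk>cmin < c; c \<le> cmax; dmin \<le> d; d \<le> dmax\<rbrakk> \<Longrightarrow> IC a p c d (c - 1) d"
    and IC_dur: "\<lbrakk>cmin \<le> c; c \<le> cmax; dmin < d; d \<le> dmax\<rbrakk> \<Longrightarrow> IC a p c d c (d - 1)"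
begin

lemma IC_row_up:
  assumes "cmin \<le> c" "c \<le> c'" "c' \<le> cmax" "dmin \<le> d" "d \<le> dmax"
  shows "IC a p c d c' d"
  using \<open>c \<le> c'\<close> \<open>cmin \<le> c\<close>
proof (induction c rule: int_le_induct)
  case base
  show ?case by (rule IC_refl)
next
  case (step i)
  show ?case
  proof (rule IC_trans)
    show "IC a p (i - 1) d (i - 1 + 1) d"
      using step assms by (intro IC_up) auto
    show "IC a p (i - 1 + 1) d c' d"
      using step by simp
    show "0 \<le> real_of_int (i - 1 + 1 - (i - 1)) * (a (i - 1 + 1) d - a c' d)"
      using antimono_cost[of i c' d] step assms by simp
  qed
qed

lemma IC_row_down:
  assumes "cmin \<le> c'" "c' \<le> c" "c \<le> cmax" "dmin \<le> d" "d \<le> dmax"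
  shows "IC a p c d c' d"
  using \<open>c' \<le> c\<close> \<open>c \<le> cmax\<close>
proof (induction c rule: int_ge_induct)
  case base
  show ?case by (rule IC_refl)
next
  case (step i)
  show ?case
  proof (rule IC_trans)
    show "IC a p (i + 1) d (i + 1 - 1) d"
      using step assms by (intro IC_down) auto
    show "IC a p (i + 1 - 1) d c' d"
      using step by simp
    show "0 \<le> real_of_int (i + 1 - 1 - (i + 1)) * (a (i + 1 - 1) d - a c' d)"
      using antimono_cost[of c' i d] step assms by (simp add: mult_le_0_iff)
  qed
qed

lemma IC_row:
  assumes "cmin \<le> c" "c \<le> cmax" "cmin \<le> c'" "c' \<le> cmax" "dmin \<le> d" "d \<le> dmax"
  shows "IC a p c d c' d"
  using assms IC_row_up IC_row_down by (cases "c \<le> c'") auto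

lemma IC_lower_duration:
  assumes "cmin \<le> c" "c \<le> cmax" "cmin \<le> c'" "c' \<le> cmax"
    and "dmin \<le> d'" "d' \<le> d" "d \<le> dmax"
  shows "IC a p c d c' d'"
  using \<open>d' \<le> d\<close> \<open>d \<le> dmax\<close>
proof (induction d rule: int_ge_induct)
  case base
  show ?case using IC_row assms by simp
next
  case (step i)
  show ?case
  proof (rule IC_trans)
    show "IC a p c (i + 1) c (i + 1 - 1)"
      using step assms by (intro IC_dur) auto
    show "IC a p c (i + 1 - 1) c' d'"
      using step by simp
  qed simp
qed

end

theorem theorem1:
  fixes cmin cmax dmin dmax :: int
    and a p :: "int \<Rightarrow> int \<Rightarrow> real"
  defines "T \<equiv> {cmin..cmax} \<times> {dmin..dmax}"
  assumes "cmin \<le> cmax" and "dmin \<le> dmax"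
    and a_range: "\<forall>(c, d) \<in> T. 0 \<le> a c d \<and> a c d \<le> 1"
    and mono: "\<forall>(c, d) \<in> T. \<forall>(c', d') \<in> T. c \<le> c' \<and> d \<ge> d' \<longrightarrow> a c d \<ge> a c' d'"
    and up: "\<forall>(c, d) \<in> T. c < cmax \<longrightarrow> IC a p c d (c + 1) d"
    and down: "\<forall>(c, d) \<in> T. c > cmin \<longrightarrow> IC a p c d (c - 1) d"
    and dur: "\<forall>(c, d) \<in> T. d > dmin \<longrightarrow> IC a p c d c (d - 1)"
  shows "\<forall>(c, d) \<in> T. \<forall>(c', d') \<in> T. d' \<le> d \<longrightarrow> IC a p c d c' d'"
proof -
  interpret local_IC cmin cmax dmin dmax a p
  proof
    show "a c' d \<le> a c d" if "cmin \<le> c" "c \<le> c'" "c' \<le> cmax" "dmin \<le> d" "d \<le> dmax"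
      for c c' d
      using mono that unfolding T_def by fastforce
  qed (use up down dur in \<open>auto simp: T_def\<close>)
  show ?thesis
    unfolding T_def using IC_lower_duration by auto
qed

end
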